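(* Let $g,h:\mathbb{R}^n\to\mathbb{R}\cup\{+\infty\}$ satisfy Assumptions A1 (with parameter $\rho>0$) and A2 (with $\mathcal{F}$ replaced by $\mathcal{F}':=\{x:c_i(x)\le0,\ i=1,\dots,p\}$), where $c_1,\dots,c_p:\mathbb{R}^n\to\mathbb{R}$ are convex and continuously differentiable, and let $\phi=g-h$. Let $x_k\in\mathcal{F}'$, $u_k\in\partial h(x_k)$, let $y_k$ be the unique minimizer of $g(x)-\langle u_k,x\rangle$ over $\mathcal{F}'$, assume the KKT conditions hold at $y_k$ for this subproblem (i.e. there are $\mu_i\ge0$ with $\nabla g(y_k)=u_k-\sum_i\mu_i\nabla c_i(y_k)$ and $\mu_ic_i(y_k)=0$), and assume $y_k\in\operatorname{dom}h$. Set $d_k:=y_k-x_k$. Then (a) $\phi'(y_k;d_k)\le-\rho\|d_k\|^2$; and (b) for every $i$ with $c_i(y_k)=0$, $\langle\nabla c_i(y_k),d_k\rangle\ge -c_i(x_k)\ge0$.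
   Context: Assumption A1: $g$ and $h$ are strongly convex on their domains with the same parameter $\rho>0$. Assumption A2: $\partial h(x)\ne\emptyset$ for all $x\in\operatorname{dom}h$; $g$ is continuously differentiable on an open set containing $\operatorname{dom}h$; $\inf_{x\in\mathcal{F}'}\phi(x)>-\infty$. $\phi'(y;d)$ denotes the one-sided directional derivative of $\phi$ at $y$ in direction $d$. *)

theory Defs
  imports "HOL-Analysis.Analysis"
begin

text \<open>Extended-real valued functions R^n -> R \<union> {+\<infinity>} are modelled as 'a => ereal
  that never take the value -\<infinity>.\<close>

definition edom :: "('a \<Rightarrow> ereal) \<Rightarrow> 'a set" where
  "edom f = {x. f x \<noteq> \<infinity>}"

definition proper_ext :: "('a \<Rightarrow> ereal) \<Rightarrow> bool" where
  "proper_ext f \<longleftrightarrow> (\<forall>x. f x \<noteq> -\<infinity>)"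

definition strongly_convex_dom :: "('a::real_normed_vector \<Rightarrow> ereal) \<Rightarrow> real \<Rightarrow> bool" where
  "strongly_convex_dom f \<rho> \<longleftrightarrow> convex (edom f) \<and>
     (\<forall>x\<in>edom f. \<forall>y\<in>edom f. \<forall>t::real. 0 \<le> t \<and> t \<le> 1 \<longrightarrow>
        f ((1 - t) *\<^sub>R x + t *\<^sub>R y)
          \<le> ereal (1 - t) * f x + ereal t * f y - ereal (\<rho> / 2 * t * (1 - t) * (norm (x - y))\<^sup>2))"

definition subdiff :: "('a::real_inner \<Rightarrow> ereal) \<Rightarrow> 'a \<Rightarrow> 'a set" where
  "subdiff f x = {u. f x \<noteq> \<infinity> \<and> (\<forall>z. f x + ereal (u \<bullet> (z - x)) \<le> f z)}"

definition has_dir_deriv :: "('a::real_vector \<Rightarrow> ereal) \<Rightarrow> 'a \<Rightarrow> 'a \<Rightarrow> ereal \<Rightarrow> bool" where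
  "has_dir_deriv f y d D \<longleftrightarrow>
     ((\<lambda>t::real. (f (y + t *\<^sub>R d) - f y) / ereal t) \<longlongrightarrow> D) (at_right 0)"

end

theory Submission
  imports Defs
begin

text \<open>
  Part (b) is the gradient inequality for the convex constraint \<open>c\<^sub>i\<close> at \<open>y\<^sub>k\<close>, evaluated
  at the feasible point \<open>x\<^sub>k\<close>. With complementary slackness it makes the multiplier term of
  the KKT equation nonnegative along \<open>d = y\<^sub>k - x\<^sub>k\<close>, so \<open>g'(y\<^sub>k; d) = \<langle>\<nabla>g(y\<^sub>k), d\<rangle> \<le> \<langle>u\<^sub>k, d\<rangle>\<close>.

  For \<open>h\<close> restrict to the line \<open>s \<mapsto> y\<^sub>k + s d\<close>, which passes through \<open>x\<^sub>k\<close> at \<open>s = -1\<close>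
  and carries a one-dimensional strongly convex function with modulus \<open>\<rho> \<parallel>d\<parallel>\<^sup>2\<close>. Its
  right difference quotients at 0 decrease as \<open>s \<down> 0\<close> and, by the three-slope inequality
  across \<open>-1 < 0 < s\<close>, stay above \<open>h(y\<^sub>k) - h(x\<^sub>k) + \<rho>/2 \<parallel>d\<parallel>\<^sup>2\<close>; strong convexity
  together with the subgradient inequality at \<open>x\<^sub>k\<close> gives \<open>h(y\<^sub>k) - h(x\<^sub>k) \<ge> \<langle>u\<^sub>k, d\<rangle> + \<rho>/2 \<parallel>d\<parallel>\<^sup>2\<close>.
  Hence \<open>h'(y\<^sub>k; d) \<ge> \<langle>u\<^sub>k, d\<rangle> + \<rho> \<parallel>d\<parallel>\<^sup>2\<close> and (a) follows by subtraction. If \<open>h = +\<infinity>\<close> on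
  the whole open ray beyond \<open>y\<^sub>k\<close>, the quotients of \<open>\<phi>\<close> are \<open>-\<infinity>\<close> and (a) is trivial.
\<close>

definition strongly_convex_on :: "'a::real_normed_vector set \<Rightarrow> ('a \<Rightarrow> real) \<Rightarrow> real \<Rightarrow> bool" where
  "strongly_convex_on S f m \<longleftrightarrow> convex S \<and>
     (\<forall>x\<in>S. \<forall>y\<in>S. \<forall>t. 0 \<le> t \<and> t \<le> 1 \<longrightarrow>
        f ((1 - t) *\<^sub>R x + t *\<^sub>R y) \<le> (1 - t) * f x + t * f y - m / 2 * t * (1 - t) * (norm (x - y))\<^sup>2)"

lemma strongly_convex_onD:
  assumes "strongly_convex_on S f m" "x \<in> S" "y \<in> S" "0 \<le> t" "t \<le> 1"
  shows "f ((1 - t) *\<^sub>R x + t *\<^sub>R y) \<le> (1 - t) * f x + t * f y - m / 2 * t * (1 - t) * (norm (x - y))\<^sup>2"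
  using assms unfolding strongly_convex_on_def by blast

lemma strongly_convex_on_imp_convex_on:
  assumes "strongly_convex_on S f m" "m \<ge> 0"
  shows "convex_on S f"
proof
  show "convex S" using assms(1) unfolding strongly_convex_on_def by blast
  fix t :: real and x y assume t: "t > 0" "t < 1" and xy: "x \<in> S" "y \<in> S"
  have "0 \<le> m / 2 * t * (1 - t) * (norm (x - y))\<^sup>2" using t assms(2) by simp
  then show "f ((1 - t) *\<^sub>R x + t *\<^sub>R y) \<le> (1 - t) * f x + t * f y"
    using strongly_convex_onD[OF assms(1) xy, of t] t by linarith
qed

lemma proper_ext_edom_real:
  assumes "proper_ext f" "x \<in> edom f"
  shows "f x = ereal (real_of_ereal (f x))"
  using assms unfolding edom_def proper_ext_def by (cases "f x") auto

lemma strongly_convex_dom_imp_strongly_convex_on: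
  assumes "proper_ext f" "strongly_convex_dom f m"
  shows "strongly_convex_on (edom f) (\<lambda>x. real_of_ereal (f x)) m"
  unfolding strongly_convex_on_def
proof (intro conjI ballI allI impI)
  show cvx: "convex (edom f)" using assms(2) unfolding strongly_convex_dom_def by blast
  fix x y and t :: real assume xy: "x \<in> edom f" "y \<in> edom f" and t: "0 \<le> t \<and> t \<le> 1"
  have "(1 - t) *\<^sub>R x + t *\<^sub>R y \<in> edom f" using cvx xy t by (simp add: convex_alt)
  moreover have "f ((1 - t) *\<^sub>R x + t *\<^sub>R y)
      \<le> ereal (1 - t) * f x + ereal t * f y - ereal (m / 2 * t * (1 - t) * (norm (x - y))\<^sup>2)"
    using assms(2) xy t unfolding strongly_convex_dom_def by blast
  ultimately show "real_of_ereal (f ((1 - t) *\<^sub>R x + t *\<^sub>R y))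
      \<le> (1 - t) * real_of_ereal (f x) + t * real_of_ereal (f y) - m / 2 * t * (1 - t) * (norm (x - y))\<^sup>2"
    by (subst (asm) (1 2 3) proper_ext_edom_real[OF assms(1)]) (use xy in auto)
qed

lemma strongly_convex_on_line:
  assumes "strongly_convex_on S f m"
  shows "strongly_convex_on {s. y + s *\<^sub>R d \<in> S} (\<lambda>s. f (y + s *\<^sub>R d)) (m * (norm d)\<^sup>2)"
proof -
  have comb: "(1 - t) *\<^sub>R (y + a *\<^sub>R d) + t *\<^sub>R (y + b *\<^sub>R d) = y + ((1 - t) * a + t * b) *\<^sub>R d"
    for a b t :: real
    by (simp add: algebra_simps)
  have dist: "(norm ((y + a *\<^sub>R d) - (y + b *\<^sub>R d)))\<^sup>2 = (norm (a - b))\<^sup>2 * (norm d)\<^sup>2" for a b :: real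
    by (simp add: power_mult_distrib flip: scaleR_diff_left)
  have "convex S" using assms unfolding strongly_convex_on_def by blast
  then have "convex {s. y + s *\<^sub>R d \<in> S}"
    unfolding convex_alt by (simp flip: comb)
  moreover have "f (y + ((1 - t) * a + t * b) *\<^sub>R d)
      \<le> (1 - t) * f (y + a *\<^sub>R d) + t * f (y + b *\<^sub>R d) - m * (norm d)\<^sup>2 / 2 * t * (1 - t) * (norm (a - b))\<^sup>2"
    if "y + a *\<^sub>R d \<in> S" "y + b *\<^sub>R d \<in> S" "0 \<le> t" "t \<le> 1" for a b t :: real
    using strongly_convex_onD[OF assms that] unfolding comb dist by (simp add: mult_ac)
  ultimately show ?thesis
    unfolding strongly_convex_on_def by (simp add: algebra_simps)
qed

lemma strongly_convex_on_slope_le: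
  fixes H :: "real \<Rightarrow> real"
  assumes H: "strongly_convex_on I H m" and I: "a \<in> I" "c \<in> I" and abc: "a < b" "b < c"
  shows "(H b - H a) / (b - a) + m / 2 * (c - a) \<le> (H c - H b) / (c - b)"
proof -
  define t where "t = (b - a) / (c - a)"
  have ca: "c - a > 0" using abc by simp
  have ct: "(c - a) * t = b - a" unfolding t_def using ca by simp
  have c1t: "(c - a) * (1 - t) = c - b" using ct by (simp add: algebra_simps)
  have t: "0 \<le> t" "t \<le> 1" using abc unfolding t_def by (auto simp: field_simps)
  have "(1 - t) *\<^sub>R a + t *\<^sub>R c = a + (c - a) * t" by (simp add: algebra_simps)
  then have "(1 - t) *\<^sub>R a + t *\<^sub>R c = b" by (simp add: ct)
  then have "H b \<le> (1 - t) * H a + t * H c - m / 2 * t * (1 - t) * (norm (a - c))\<^sup>2"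
    using strongly_convex_onD[OF H I t] by simp
  then have "(c - a) * H b \<le> (c - a) * ((1 - t) * H a + t * H c - m / 2 * t * (1 - t) * (c - a)\<^sup>2)"
    using ca by (simp add: power2_commute)
  also have "\<dots> = ((c - a) * (1 - t)) * H a + ((c - a) * t) * H c
      - m / 2 * ((c - a) * t) * ((c - a) * (1 - t)) * (c - a)"
    by (simp add: field_simps power2_eq_square)
  finally have "(c - a) * H b \<le> (c - b) * H a + (b - a) * H c - m / 2 * (b - a) * (c - b) * (c - a)"
    unfolding ct c1t .
  moreover have "(c - b) * (H b - H a) + (b - a) * (c - b) * (m / 2 * (c - a)) - (b - a) * (H c - H b)
      = (c - a) * H b - ((c - b) * H a + (b - a) * H c - m / 2 * (b - a) * (c - b) * (c - a))"
    by (simp add: field_simps)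
  ultimately have "(c - b) * (H b - H a) + (b - a) * (c - b) * (m / 2 * (c - a)) \<le> (b - a) * (H c - H b)"
    by linarith
  then show ?thesis using abc by (simp add: field_simps)
qed

lemma strongly_convex_on_right_derivative:
  fixes H :: "real \<Rightarrow> real"
  assumes H: "strongly_convex_on I H m" "m \<ge> 0" and I: "a \<in> I" "t \<in> I" and signs: "a < 0" "0 < t"
  obtains L where "((\<lambda>s. (H s - H 0) / s) \<longlongrightarrow> L) (at_right 0)"
    and "(H 0 - H a) / (- a) + m / 2 * (- a) \<le> L"
proof -
  define q where "q s = (H s - H 0) / s" for s
  define K where "K = (H 0 - H a) / (- a) + m / 2 * (- a)"
  have cvx: "convex_on I H" by (rule strongly_convex_on_imp_convex_on[OF H])
  have "convex I" using H unfolding strongly_convex_on_def by blast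
  then have sub: "{a..t} \<subseteq> I"
    using I signs convex_contains_segment closed_segment_eq_real_ivl by (metis less_trans order.strict_implies_order)
  then have "0 \<in> I" using signs by auto
  have bound: "K \<le> q s" if "0 < s" "s \<le> t" for s
  proof -
    have "s \<in> I" using sub that signs by auto
    then have "(H 0 - H a) / (0 - a) + m / 2 * (s - a) \<le> q s"
      using strongly_convex_on_slope_le[OF H(1) I(1), of s 0] that signs unfolding q_def by simp
    moreover have "0 \<le> m / 2 * s" using H(2) that by simp
    ultimately show ?thesis unfolding K_def right_diff_distrib mult_minus_right diff_0 by linarith
  qed
  have mono: "q s \<le> q s'" if "s \<in> {0<..t}" "0 < s" "s \<le> s'" "s' \<in> {0<..t}" for s s'
  proof (cases "s = s'")
    case False
    have slope: "(H 0 - H x) / (0 - x) = q x" for x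
      unfolding q_def by (metis diff_0 minus_diff_eq minus_divide_divide)
    have "s' \<in> I" using sub that signs by auto
    then show ?thesis
      using convex_on_slope_le(1)[OF cvx \<open>0 \<in> I\<close>, of s' s] that False unfolding slope by simp
  qed simp
  have "(q \<longlongrightarrow> Inf (q ` ({0<..} \<inter> {0<..t}))) (at 0 within ({0<..} \<inter> {0<..t}))"
    by (rule Lim_right_bound[OF mono bound]) auto
  moreover have "at (0::real) within ({0<..} \<inter> {0<..t}) = at_right 0"
    by (rule at_within_nhd[where S = "{-1<..<t}"]) (use signs in auto)
  ultimately have lim: "(q \<longlongrightarrow> Inf (q ` ({0<..} \<inter> {0<..t}))) (at_right 0)" by simp
  moreover have "eventually (\<lambda>s. K \<le> q s) (at_right 0)"
    using eventually_at_right_real[OF signs(2)] by eventually_elim (use bound in auto)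
  ultimately have "K \<le> Inf (q ` ({0<..} \<inter> {0<..t}))" by (rule tendsto_lowerbound) simp
  with lim show ?thesis using that unfolding q_def K_def by blast
qed

lemma has_derivative_imp_dir_quotient_tendsto:
  fixes f :: "'a::real_normed_vector \<Rightarrow> real"
  assumes "(f has_derivative f') (at y)"
  shows "((\<lambda>s. (f (y + s *\<^sub>R d) - f y) / s) \<longlongrightarrow> f' d) (at_right 0)"
proof -
  have "bounded_linear f'" using assms by (rule has_derivative_bounded_linear)
  have "((\<lambda>s. y + s *\<^sub>R d) has_derivative (\<lambda>s. s *\<^sub>R d)) (at 0)"
    by (auto intro!: derivative_eq_intros)
  from has_derivative_compose[OF this] assms
  have "((\<lambda>s. f (y + s *\<^sub>R d)) has_derivative (\<lambda>s. f' (s *\<^sub>R d))) (at 0)" by simp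
  then have "((\<lambda>s. f (y + s *\<^sub>R d)) has_field_derivative f' d) (at 0)"
    using linear.scaleR[OF bounded_linear.linear[OF \<open>bounded_linear f'\<close>]]
    by (simp add: has_field_derivative_def mult_commute_abs)
  then have "((\<lambda>s. (f (y + s *\<^sub>R d) - f y) / s) \<longlongrightarrow> f' d) (at 0)"
    by (simp add: has_field_derivative_iff)
  then show ?thesis by (rule tendsto_mono[rotated]) (simp add: at_le)
qed

lemma convex_on_has_derivative_above_tangent:
  fixes f :: "'a::real_normed_vector \<Rightarrow> real"
  assumes f: "convex_on S f" and xy: "x \<in> S" "y \<in> S" and f': "(f has_derivative f') (at y)"
  shows "f y + f' (x - y) \<le> f x"
proof -
  have "eventually (\<lambda>s. (f (y + s *\<^sub>R (x - y)) - f y) / s \<le> f x - f y) (at_right 0)"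
    using eventually_at_right_real[OF zero_less_one]
  proof eventually_elim
    case (elim s)
    have "y + s *\<^sub>R (x - y) = (1 - s) *\<^sub>R y + s *\<^sub>R x" by (simp add: algebra_simps)
    then have "f (y + s *\<^sub>R (x - y)) - f y \<le> s * (f x - f y)"
      using convex_onD[OF f, of s y x] elim xy by (simp add: algebra_simps)
    then show ?case using elim by (simp add: divide_simps mult.commute)
  qed
  then have "f' (x - y) \<le> f x - f y"
    by (rule tendsto_upperbound[OF has_derivative_imp_dir_quotient_tendsto[OF f']]) simp
  then show ?thesis by simp
qed

lemma strongly_convex_on_subgradient:
  fixes f :: "'a::real_inner \<Rightarrow> real"
  assumes f: "strongly_convex_on S f m" and xy: "x \<in> S" "y \<in> S"
    and u: "\<And>z. z \<in> S \<Longrightarrow> f x + u \<bullet> (z - x) \<le> f z"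
  shows "f x + u \<bullet> (y - x) + m / 2 * (norm (y - x))\<^sup>2 \<le> f y"
proof -
  define K where "K = f y - f x - u \<bullet> (y - x)"
  have bound: "m / 2 * (1 - t) * (norm (y - x))\<^sup>2 \<le> K" if t: "0 < t" "t < 1" for t
  proof -
    have "convex S" using f unfolding strongly_convex_on_def by blast
    then have z: "(1 - t) *\<^sub>R x + t *\<^sub>R y \<in> S" using xy t by (simp add: convex_alt)
    have "(1 - t) *\<^sub>R x + t *\<^sub>R y - x = t *\<^sub>R (y - x)" by (simp add: algebra_simps)
    then have "f x + t * (u \<bullet> (y - x)) \<le> f ((1 - t) *\<^sub>R x + t *\<^sub>R y)" using u[OF z] by simp
    also have "\<dots> \<le> (1 - t) * f x + t * f y - m / 2 * t * (1 - t) * (norm (y - x))\<^sup>2"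
      using strongly_convex_onD[OF f xy] t by (simp add: norm_minus_commute)
    finally have "t * (m / 2 * (1 - t) * (norm (y - x))\<^sup>2) \<le> t * K"
      unfolding K_def by (simp add: algebra_simps)
    then show ?thesis using t by simp
  qed
  have "((\<lambda>t. m / 2 * (1 - t) * (norm (y - x))\<^sup>2) \<longlongrightarrow> m / 2 * (1 - 0) * (norm (y - x))\<^sup>2) (at_right 0)"
    by (intro tendsto_intros)
  moreover have "eventually (\<lambda>t. m / 2 * (1 - t) * (norm (y - x))\<^sup>2 \<le> K) (at_right 0)"
    using eventually_at_right_real[OF zero_less_one] by eventually_elim (use bound in auto)
  ultimately have "m / 2 * (1 - 0) * (norm (y - x))\<^sup>2 \<le> K"
    by (rule tendsto_upperbound) simp
  then show ?thesis unfolding K_def by simp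
qed

lemma has_dir_deriv_diff_real:
  fixes g h :: "'a::real_vector \<Rightarrow> ereal"
  assumes G: "((\<lambda>s. (G s - G 0) / s) \<longlongrightarrow> a) (at_right 0)"
    and H: "((\<lambda>s. (H s - H 0) / s) \<longlongrightarrow> b) (at_right 0)"
    and ray: "\<forall>\<^sub>F s in at_right 0. g (y + s *\<^sub>R d) = ereal (G s) \<and> h (y + s *\<^sub>R d) = ereal (H s)"
    and y: "g y = ereal (G 0)" "h y = ereal (H 0)"
  shows "has_dir_deriv (\<lambda>x. g x - h x) y d (ereal (a - b))"
proof -
  have "((\<lambda>s. ereal ((G s - G 0) / s - (H s - H 0) / s)) \<longlongrightarrow> ereal (a - b)) (at_right 0)"
    by (intro tendsto_ereal tendsto_diff G H)
  moreover have "\<forall>\<^sub>F s in at_right 0. ereal ((G s - G 0) / s - (H s - H 0) / s)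
      = (g (y + s *\<^sub>R d) - h (y + s *\<^sub>R d) - (g y - h y)) / ereal s"
    using ray eventually_at_right_real[OF zero_less_one]
    by eventually_elim (simp add: y diff_divide_distrib)
  ultimately show ?thesis
    unfolding has_dir_deriv_def by (rule Lim_transform_eventually)
qed

lemma has_dir_deriv_diff_minus_infinity:
  fixes g h :: "'a::real_vector \<Rightarrow> ereal"
  assumes ray: "\<forall>\<^sub>F s in at_right 0. g (y + s *\<^sub>R d) \<noteq> \<infinity> \<and> h (y + s *\<^sub>R d) = \<infinity>"
    and y: "\<bar>g y\<bar> \<noteq> \<infinity>" "\<bar>h y\<bar> \<noteq> \<infinity>"
  shows "has_dir_deriv (\<lambda>x. g x - h x) y d (-\<infinity>)"
proof -
  have "\<forall>\<^sub>F s in at_right 0. (g (y + s *\<^sub>R d) - h (y + s *\<^sub>R d) - (g y - h y)) / ereal s = -\<infinity>"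
    using ray eventually_at_right_real[OF zero_less_one]
  proof eventually_elim
    case (elim s)
    then have "g (y + s *\<^sub>R d) - h (y + s *\<^sub>R d) = -\<infinity>" by (cases "g (y + s *\<^sub>R d)") auto
    then show ?case using y elim by (cases "g y"; cases "h y") auto
  qed
  then show ?thesis unfolding has_dir_deriv_def by (rule tendsto_eventually)
qed

lemma convex_ray_mem:
  assumes "convex S" "y \<in> S" "y + t *\<^sub>R d \<in> S" "0 \<le> s" "s \<le> t"
  shows "y + s *\<^sub>R d \<in> S"
proof (cases "t = 0")
  case False
  then have "y + s *\<^sub>R d = (1 - s / t) *\<^sub>R y + (s / t) *\<^sub>R (y + t *\<^sub>R d)"
    by (simp add: algebra_simps)
  then show ?thesis using assms False by (simp add: convex_alt)
qed (use assms in simp)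

lemma strongly_convex_dom_right_derivative:
  fixes h :: "'a::real_inner \<Rightarrow> ereal"
  assumes m: "m \<ge> 0" and h: "proper_ext h" "strongly_convex_dom h m"
    and u: "u \<in> subdiff h x" and y: "y \<in> edom h" and t: "0 < t" "y + t *\<^sub>R (y - x) \<in> edom h"
  obtains L
  where "((\<lambda>s. (real_of_ereal (h (y + s *\<^sub>R (y - x))) - real_of_ereal (h y)) / s) \<longlongrightarrow> L) (at_right 0)"
    and "u \<bullet> (y - x) + m * (norm (y - x))\<^sup>2 \<le> L"
proof -
  define d where "d = y - x"
  define H where "H s = real_of_ereal (h (y + s *\<^sub>R d))" for s
  have x: "x \<in> edom h" using u unfolding subdiff_def edom_def by simp
  have S: "strongly_convex_on (edom h) (\<lambda>z. real_of_ereal (h z)) m"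
    by (rule strongly_convex_dom_imp_strongly_convex_on[OF h])
  then have I: "strongly_convex_on {s. y + s *\<^sub>R d \<in> edom h} H (m * (norm d)\<^sup>2)"
    unfolding H_def by (rule strongly_convex_on_line)
  have "-1 \<in> {s. y + s *\<^sub>R d \<in> edom h}" "t \<in> {s. y + s *\<^sub>R d \<in> edom h}"
    using x t unfolding d_def by auto
  from strongly_convex_on_right_derivative[OF I _ this] t m
  obtain L where H_lim: "((\<lambda>s. (H s - H 0) / s) \<longlongrightarrow> L) (at_right 0)"
    and L: "H 0 - H (-1) + m * (norm d)\<^sup>2 / 2 \<le> L" by auto
  have "real_of_ereal (h x) + u \<bullet> (y - x) + m / 2 * (norm (y - x))\<^sup>2 \<le> real_of_ereal (h y)"
  proof (rule strongly_convex_on_subgradient[OF S x y])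
    fix z assume "z \<in> edom h"
    have "h x + ereal (u \<bullet> (z - x)) \<le> h z" using u unfolding subdiff_def by blast
    then show "real_of_ereal (h x) + u \<bullet> (z - x) \<le> real_of_ereal (h z)"
      by (subst (asm) (1 2) proper_ext_edom_real[OF h(1)]) (use x \<open>z \<in> edom h\<close> in auto)
  qed
  with L have "u \<bullet> (y - x) + m * (norm (y - x))\<^sup>2 \<le> L" unfolding H_def d_def by simp
  moreover have "((\<lambda>s. (real_of_ereal (h (y + s *\<^sub>R (y - x))) - real_of_ereal (h y)) / s) \<longlongrightarrow> L) (at_right 0)"
    using H_lim unfolding H_def d_def by simp
  ultimately show ?thesis using that by blast
qed

lemma dc_dir_deriv_le:
  fixes g h :: "'a::real_inner \<Rightarrow> ereal"
  assumes m: "m \<ge> 0" and h: "proper_ext h" "strongly_convex_dom h m"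
    and u: "u \<in> subdiff h x" and y: "y \<in> edom h"
    and U: "open U" "y \<in> U" "U \<subseteq> edom g" and g: "proper_ext g"
    and g': "((\<lambda>z. real_of_ereal (g z)) has_derivative g') (at y)" and descent: "g' (y - x) \<le> u \<bullet> (y - x)"
  shows "\<exists>D. has_dir_deriv (\<lambda>z. g z - h z) y (y - x) D \<and> D \<le> ereal (- m * (norm (y - x))\<^sup>2)"
proof -
  define d where "d = y - x"
  define G where "G s = real_of_ereal (g (y + s *\<^sub>R d))" for s
  define H where "H s = real_of_ereal (h (y + s *\<^sub>R d))" for s
  have "((\<lambda>s. y + s *\<^sub>R d) \<longlongrightarrow> y) (at_right 0)"
    by (auto intro!: tendsto_eq_intros)
  from topological_tendstoD[OF this U(1,2)]
  have g_ray: "\<forall>\<^sub>F s in at_right 0. g (y + s *\<^sub>R d) = ereal (G s)"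
    by eventually_elim (unfold G_def, rule proper_ext_edom_real[OF g], use U(3) in blast)
  have gy: "g y = ereal (G 0)"
    unfolding G_def by (simp only: scale_zero_left add_0_right) (rule proper_ext_edom_real[OF g], use U in blast)
  have hy: "h y = ereal (H 0)"
    unfolding H_def by (simp only: scale_zero_left add_0_right) (rule proper_ext_edom_real[OF h(1) y])
  show ?thesis
  proof (cases "\<exists>t>0. y + t *\<^sub>R d \<in> edom h")
    case False
    have "\<forall>\<^sub>F s in at_right 0. g (y + s *\<^sub>R d) \<noteq> \<infinity> \<and> h (y + s *\<^sub>R d) = \<infinity>"
      using g_ray eventually_at_right_real[OF zero_less_one]
      by eventually_elim (use False in \<open>auto simp: edom_def\<close>)
    then have "has_dir_deriv (\<lambda>z. g z - h z) y d (-\<infinity>)"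
      by (rule has_dir_deriv_diff_minus_infinity) (simp_all add: gy hy)
    moreover have "-\<infinity> \<le> ereal (- m * (norm d)\<^sup>2)" by simp
    ultimately show ?thesis unfolding d_def by blast
  next
    case True
    then obtain t where t: "t > 0" "y + t *\<^sub>R d \<in> edom h" by blast
    from strongly_convex_dom_right_derivative[OF m h u y, of t] t
    obtain L where "((\<lambda>s. (H s - H 0) / s) \<longlongrightarrow> L) (at_right 0)" and L: "u \<bullet> d + m * (norm d)\<^sup>2 \<le> L"
      unfolding H_def d_def by auto
    moreover have "\<forall>\<^sub>F s in at_right 0. g (y + s *\<^sub>R d) = ereal (G s) \<and> h (y + s *\<^sub>R d) = ereal (H s)"
      using g_ray eventually_at_right_real[OF t(1)]
    proof eventually_elim
      case (elim s)
      have "convex (edom h)" using h(2) unfolding strongly_convex_dom_def by blast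
      then have "y + s *\<^sub>R d \<in> edom h" using convex_ray_mem[OF _ y t(2), of s] elim by simp
      then show ?case using elim unfolding H_def by (simp add: proper_ext_edom_real[OF h(1), symmetric])
    qed
    moreover have "((\<lambda>s. (G s - G 0) / s) \<longlongrightarrow> g' d) (at_right 0)"
      using has_derivative_imp_dir_quotient_tendsto[OF g'] unfolding G_def by simp
    ultimately have "has_dir_deriv (\<lambda>z. g z - h z) y d (ereal (g' d - L))"
      using has_dir_deriv_diff_real gy hy by blast
    moreover have "g' d - L \<le> - m * (norm d)\<^sup>2" using descent L unfolding d_def by simp
    ultimately show ?thesis unfolding d_def by auto
  qed
qed

lemma kkt_stationarity_descent:
  fixes u v d :: "'a::real_inner"
  assumes \<mu>: "\<forall>i<p. \<mu> i \<ge> 0" and stat: "v = u - (\<Sum>i<p. \<mu> i *\<^sub>R w i)"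
    and slack: "\<forall>i<p. \<mu> i * c i = 0" and active: "\<forall>i<p. c i = 0 \<longrightarrow> 0 \<le> w i \<bullet> d"
  shows "v \<bullet> d \<le> u \<bullet> d"
proof -
  have "0 \<le> \<mu> i * (w i \<bullet> d)" if "i < p" for i
    using \<mu> slack active that by (cases "\<mu> i = 0") auto
  then have "0 \<le> (\<Sum>i<p. \<mu> i * (w i \<bullet> d))" by (intro sum_nonneg) simp
  then show ?thesis by (simp add: stat inner_diff_left inner_sum_left)
qed

theorem mainTheorem5:
  fixes g h :: "'a::euclidean_space \<Rightarrow> ereal"
    and \<rho> :: real
    and U :: "'a set" and gradg :: "'a \<Rightarrow> 'a"
    and p :: nat and c :: "nat \<Rightarrow> 'a \<Rightarrow> real" and gradc :: "nat \<Rightarrow> 'a \<Rightarrow> 'a"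
    and xk uk yk :: 'a
  assumes rho_pos: "\<rho> > 0"
    and g_proper: "proper_ext g" and h_proper: "proper_ext h"
    and A1_g: "strongly_convex_dom g \<rho>" and A1_h: "strongly_convex_dom h \<rho>"
    and c_convex: "\<And>i. i < p \<Longrightarrow> convex_on UNIV (c i)"
    and c_deriv: "\<And>i x. i < p \<Longrightarrow> (c i has_derivative (\<lambda>v. gradc i x \<bullet> v)) (at x)"
    and c_C1: "\<And>i. i < p \<Longrightarrow> continuous_on UNIV (gradc i)"
    and A2_subdiff: "\<And>x. x \<in> edom h \<Longrightarrow> subdiff h x \<noteq> {}"
    and A2_U: "open U" "edom h \<subseteq> U"
    and A2_g_finite: "\<And>x. x \<in> U \<Longrightarrow> g x \<noteq> \<infinity>"
    and A2_g_deriv: "\<And>x. x \<in> U \<Longrightarrow>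
          ((\<lambda>z. real_of_ereal (g z)) has_derivative (\<lambda>v. gradg x \<bullet> v)) (at x)"
    and A2_g_C1: "continuous_on U gradg"
    and A2_bdd: "\<exists>B::real. \<forall>x\<in>{x. \<forall>i<p. c i x \<le> 0}. ereal B \<le> g x - h x"
    and xk_feas: "\<forall>i<p. c i xk \<le> 0"
    and uk_sub: "uk \<in> subdiff h xk"
    and yk_unique_min: "\<And>z. (\<forall>i<p. c i z \<le> 0) \<Longrightarrow>
          ((\<forall>x. (\<forall>i<p. c i x \<le> 0) \<longrightarrow> g z - ereal (uk \<bullet> z) \<le> g x - ereal (uk \<bullet> x)) \<longleftrightarrow> z = yk)"
    and yk_feas: "\<forall>i<p. c i yk \<le> 0"
    and KKT: "\<exists>\<mu>::nat \<Rightarrow> real. (\<forall>i<p. \<mu> i \<ge> 0)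
                 \<and> gradg yk = uk - (\<Sum>i<p. \<mu> i *\<^sub>R gradc i yk)
                 \<and> (\<forall>i<p. \<mu> i * c i yk = 0)"
    and yk_dom: "yk \<in> edom h"
  shows "(\<exists>D. has_dir_deriv (\<lambda>x. g x - h x) yk (yk - xk) D
              \<and> D \<le> ereal (- \<rho> * (norm (yk - xk))\<^sup>2))
       \<and> (\<forall>i<p. c i yk = 0 \<longrightarrow>
              gradc i yk \<bullet> (yk - xk) \<ge> - c i xk \<and> - c i xk \<ge> 0)"
proof -
  obtain \<mu> :: "nat \<Rightarrow> real" where \<mu>: "\<forall>i<p. \<mu> i \<ge> 0"
    and stat: "gradg yk = uk - (\<Sum>i<p. \<mu> i *\<^sub>R gradc i yk)"
    and slack: "\<forall>i<p. \<mu> i * c i yk = 0"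
    using KKT by blast
  have tangent: "c i yk + gradc i yk \<bullet> (xk - yk) \<le> c i xk" if "i < p" for i
    by (rule convex_on_has_derivative_above_tangent[OF c_convex[OF that] UNIV_I UNIV_I c_deriv[OF that]])
  have active: "gradc i yk \<bullet> (yk - xk) \<ge> - c i xk \<and> - c i xk \<ge> 0" if "i < p" "c i yk = 0" for i
    using tangent[OF that(1)] xk_feas that by (simp add: inner_diff_right)
  then have "gradg yk \<bullet> (yk - xk) \<le> uk \<bullet> (yk - xk)"
    by (intro kkt_stationarity_descent[OF \<mu> stat slack] allI impI) fastforce
  moreover have "yk \<in> U" "U \<subseteq> edom g"
    using yk_dom A2_U(2) A2_g_finite unfolding edom_def by auto
  ultimately have "\<exists>D. has_dir_deriv (\<lambda>x. g x - h x) yk (yk - xk) D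
      \<and> D \<le> ereal (- \<rho> * (norm (yk - xk))\<^sup>2)"
    using dc_dir_deriv_le[OF _ h_proper A1_h uk_sub yk_dom A2_U(1) _ _ g_proper A2_g_deriv] rho_pos
    by simp
  with active show ?thesis by blast
qed

end
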